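(* Let $\mathcal{F}$ be a set of reductions. The following are equivalent: (i) for every family $\{f_k:k\in\omega\}\subseteq\mathcal{F}$, the function $\overline{\bigoplus}_k f_k$ belongs to $\mathcal{F}$; (ii) for every family $\{f_k:k\in\omega\}\subseteq\mathcal{F}$, the function $\bigcup_k(f_k\restriction\mathbf{N}_{\langle k\rangle})$ belongs to $\mathcal{F}$, and $\mathsf{Lip}\subseteq\mathcal{F}$.
   Context: $\mathbb{R}={}^\omega\omega$ with metric $d(x,y)=2^{-n}$, $n$ least with $x(n)\neq y(n)$ ($d(x,x)=0$); $\mathbf{N}_s=\{x:s\subseteq x\}$. For $C>0$, $\mathsf{Lip}(C)$ is the set of $f:\mathbb{R}\to\mathbb{R}$ with $d(f(x),f(y))\le C\,d(x,y)$; $\mathsf{Lip}=\bigcup_{k\in\mathbb{Z}}\mathsf{Lip}(2^k)$ and $\mathsf{L}=\mathsf{Lip}(1)$. A set of reductions is a set $\mathcal{F}$ of functions $\mathbb{R}\to\mathbb{R}$ closed under composition, with $\mathsf{L}\subseteq\mathcal{F}$, admitting a surjection $\mathbb{R}\twoheadrightarrow\mathcal{F}$. For $x\in\mathbb{R}$, $x^-=\langle x(n+1):n\in\omega\rangle$, and $\overline{\bigoplus}_k f_k(x)=f_{x(0)}(x^-)$. $\bigcup_k(f_k\restriction\mathbf{N}_{\langle k\rangle})$ is the function agreeing with $f_k$ on $\mathbf{N}_{\langle k\rangle}$ for each $k$. *)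

theory Defs
  imports Complex_Main
begin

type_synonym baire = "nat \<Rightarrow> nat"

definition bdist :: "baire \<Rightarrow> baire \<Rightarrow> real" where
  "bdist x y = (if x = y then 0 else (1/2) ^ (LEAST n. x n \<noteq> y n))"

definition Lip_C :: "real \<Rightarrow> (baire \<Rightarrow> baire) set" where
  "Lip_C C = {f. \<forall>x y. bdist (f x) (f y) \<le> C * bdist x y}"

definition Lip :: "(baire \<Rightarrow> baire) set" where
  "Lip = (\<Union>k::int. Lip_C (2 powi k))"

definition Lip1 :: "(baire \<Rightarrow> baire) set" where
  "Lip1 = Lip_C 1"

definition set_of_reductions :: "(baire \<Rightarrow> baire) set \<Rightarrow> bool" where
  "set_of_reductions F \<longleftrightarrow>
     (\<forall>f\<in>F. \<forall>g\<in>F. f \<circ> g \<in> F) \<and> Lip1 \<subseteq> F \<and> (\<exists>h::baire \<Rightarrow> (baire \<Rightarrow> baire). range h = F)"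

definition tail :: "baire \<Rightarrow> baire" where
  "tail x = (\<lambda>n. x (Suc n))"

definition glued_sum :: "(nat \<Rightarrow> baire \<Rightarrow> baire) \<Rightarrow> baire \<Rightarrow> baire" where
  "glued_sum f = (\<lambda>x. f (x 0) (tail x))"

text \<open>The function agreeing with f k on N_<k>, for each k.\<close>
definition piecewise_union :: "(nat \<Rightarrow> baire \<Rightarrow> baire) \<Rightarrow> baire \<Rightarrow> baire" where
  "piecewise_union f = (\<lambda>x. f (x 0) x)"

end

theory Submission
  imports Defs
begin

text \<open>Each operation is the other one applied after a Lipschitz map: the piecewise union of the
\<open>f k\<close> is the glued sum of the \<open>f k \<circ> bcons k\<close>, where prepending \<open>k\<close> is in \<open>Lip1\<close>, and the
glued sum of the \<open>f k\<close> is the piecewise union of the \<open>f k \<circ> tail\<close>, where \<open>tail\<close> is in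
\<open>Lip_C 2\<close>. For the missing inclusion \<open>Lip \<subseteq> F\<close>: if \<open>f \<in> Lip_C (2 * C)\<close> then every
\<open>f \<circ> bcons j \<in> Lip_C C\<close>, since prepending halves distances, and \<open>f\<close> is the glued sum of these
maps; so closure under glued sums climbs from \<open>Lip1\<close> through all \<open>Lip_C (2 ^ n)\<close>.\<close>

definition bcons :: "nat \<Rightarrow> baire \<Rightarrow> baire" where
  "bcons k y = (\<lambda>n. case n of 0 \<Rightarrow> k | Suc m \<Rightarrow> y m)"

definition closed_under_glued_sum :: "(baire \<Rightarrow> baire) set \<Rightarrow> bool" where
  "closed_under_glued_sum F \<longleftrightarrow> (\<forall>f. (\<forall>k. f k \<in> F) \<longrightarrow> glued_sum f \<in> F)"

definition closed_under_piecewise_union :: "(baire \<Rightarrow> baire) set \<Rightarrow> bool" where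
  "closed_under_piecewise_union F \<longleftrightarrow> (\<forall>f. (\<forall>k. f k \<in> F) \<longrightarrow> piecewise_union f \<in> F)"

lemma bdist_nonneg: "bdist x y \<ge> 0"
  by (simp add: bdist_def)

lemma bdist_le_1: "bdist x y \<le> 1"
  by (simp add: bdist_def power_le_one)

lemma bcons_tail: "bcons (x 0) (tail x) = x"
  by (rule ext) (simp add: bcons_def tail_def split: nat.split)

lemma bdist_bcons: "bdist (bcons k y) (bcons k y') = bdist y y' / 2"
proof (cases "y = y'")
  case True
  then show ?thesis by (simp add: bdist_def)
next
  case False
  then obtain m where m: "y m \<noteq> y' m" by auto
  then have "bcons k y \<noteq> bcons k y'"
    by (metis bcons_def nat.case(2))
  moreover have "(LEAST n. bcons k y n \<noteq> bcons k y' n)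
      = Suc (LEAST n. bcons k y (Suc n) \<noteq> bcons k y' (Suc n))"
    by (rule Least_Suc[of _ "Suc m"]) (use m in \<open>auto simp: bcons_def\<close>)
  ultimately show ?thesis
    using False by (simp add: bdist_def bcons_def)
qed

lemma bdist_first_differs:
  assumes "x 0 \<noteq> y 0"
  shows "bdist x y = 1"
proof -
  have "(LEAST n. x n \<noteq> y n) = 0"
    using assms by (intro Least_eq_0) auto
  moreover have "x \<noteq> y" using assms by auto
  ultimately show ?thesis by (simp add: bdist_def)
qed

lemma bcons_in_Lip1: "bcons k \<in> Lip1"
  by (auto simp: Lip1_def Lip_C_def bdist_bcons bdist_nonneg)

lemma tail_in_Lip_C_2: "tail \<in> Lip_C 2"
  unfolding Lip_C_def
proof (intro CollectI allI)
  fix x y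
  show "bdist (tail x) (tail y) \<le> 2 * bdist x y"
  proof (cases "x 0 = y 0")
    case True
    then have "bdist x y = bdist (tail x) (tail y) / 2"
      by (metis bcons_tail bdist_bcons)
    then show ?thesis by simp
  next
    case False
    then show ?thesis
      using bdist_le_1[of "tail x" "tail y"] by (simp add: bdist_first_differs)
  qed
qed

lemma tail_in_Lip: "tail \<in> Lip"
  using tail_in_Lip_C_2 unfolding Lip_def by (metis UN_iff UNIV_I power_int_1_right)

lemma Lip_C_mono: "C \<le> D \<Longrightarrow> Lip_C C \<subseteq> Lip_C D"
  unfolding Lip_C_def by (auto intro: order_trans[OF _ mult_right_mono[OF _ bdist_nonneg]])

lemma comp_bcons_in_Lip_C: "f \<in> Lip_C (2 * C) \<Longrightarrow> f \<circ> bcons j \<in> Lip_C C"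
  unfolding Lip_C_def
proof (intro CollectI allI)
  fix y y'
  assume "f \<in> {f. \<forall>x y. bdist (f x) (f y) \<le> 2 * C * bdist x y}"
  then have "bdist (f (bcons j y)) (f (bcons j y')) \<le> 2 * C * bdist (bcons j y) (bcons j y')"
    by simp
  then show "bdist ((f \<circ> bcons j) y) ((f \<circ> bcons j) y') \<le> C * bdist y y'"
    by (simp add: bdist_bcons)
qed

lemma glued_sum_comp_bcons: "glued_sum (\<lambda>j. f \<circ> bcons j) = f"
  by (rule ext) (simp add: glued_sum_def bcons_tail)

lemma piecewise_union_eq_glued_sum: "piecewise_union f = glued_sum (\<lambda>k. f k \<circ> bcons k)"
  by (rule ext) (simp add: glued_sum_def piecewise_union_def bcons_tail)

lemma glued_sum_eq_piecewise_union: "glued_sum f = piecewise_union (\<lambda>k. f k \<circ> tail)"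
  by (rule ext) (simp add: glued_sum_def piecewise_union_def)

lemma power_int_2_le_power_nat: "(2::real) powi k \<le> 2 ^ nat k"
proof (cases "k \<ge> 0")
  case True
  then show ?thesis by (metis int_nat_eq order_refl power_int_of_nat)
next
  case False
  then obtain m where "k = - int m"
    by (metis minus_minus nat_0_le neg_0_le_iff_le nle_le)
  then have "(2::real) powi k \<le> 1"
    by (simp add: power_int_minus inverse_le_1_iff)
  then show ?thesis using False by simp
qed

lemma Lip_C_power_2_subset:
  assumes "closed_under_glued_sum F" and "Lip1 \<subseteq> F"
  shows "Lip_C (2 ^ n) \<subseteq> F"
proof (induction n)
  case 0
  then show ?case using assms(2) by (simp add: Lip1_def)
next
  case (Suc n)
  show ?case
  proof
    fix f assume "f \<in> Lip_C (2 ^ Suc n)"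
    then have "\<forall>j. f \<circ> bcons j \<in> F"
      using Suc comp_bcons_in_Lip_C[of f "2 ^ n"] by auto
    then have "glued_sum (\<lambda>j. f \<circ> bcons j) \<in> F"
      using assms(1) unfolding closed_under_glued_sum_def by (metis (no_types))
    then show "f \<in> F" by (simp add: glued_sum_comp_bcons)
  qed
qed

lemma Lip_subset:
  assumes "closed_under_glued_sum F" and "Lip1 \<subseteq> F"
  shows "Lip \<subseteq> F"
  unfolding Lip_def
  using Lip_C_mono[OF power_int_2_le_power_nat] Lip_C_power_2_subset[OF assms] by blast

lemma closed_under_piecewise_union_if_glued_sum:
  assumes "closed_under_glued_sum F" and "Lip1 \<subseteq> F"
    and comp: "\<And>f g. f \<in> F \<Longrightarrow> g \<in> F \<Longrightarrow> f \<circ> g \<in> F"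
  shows "closed_under_piecewise_union F"
  unfolding closed_under_piecewise_union_def
proof (intro allI impI)
  fix f :: "nat \<Rightarrow> baire \<Rightarrow> baire"
  assume "\<forall>k. f k \<in> F"
  then have "\<forall>k. f k \<circ> bcons k \<in> F"
    using comp assms(2) bcons_in_Lip1 by blast
  then show "piecewise_union f \<in> F"
    using assms(1) by (simp add: closed_under_glued_sum_def piecewise_union_eq_glued_sum)
qed

lemma closed_under_glued_sum_if_piecewise_union:
  assumes "closed_under_piecewise_union F" and "Lip \<subseteq> F"
    and comp: "\<And>f g. f \<in> F \<Longrightarrow> g \<in> F \<Longrightarrow> f \<circ> g \<in> F"
  shows "closed_under_glued_sum F"
  unfolding closed_under_glued_sum_def
proof (intro allI impI)
  fix f :: "nat \<Rightarrow> baire \<Rightarrow> baire"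
  assume "\<forall>k. f k \<in> F"
  then have "\<forall>k. f k \<circ> tail \<in> F"
    using comp assms(2) tail_in_Lip by blast
  then show "glued_sum f \<in> F"
    using assms(1) by (simp add: closed_under_piecewise_union_def glued_sum_eq_piecewise_union)
qed

theorem proposition4p1:
  fixes F :: "(baire \<Rightarrow> baire) set"
  assumes "set_of_reductions F"
  shows "(\<forall>f :: nat \<Rightarrow> baire \<Rightarrow> baire. (\<forall>k. f k \<in> F) \<longrightarrow> glued_sum f \<in> F)
     \<longleftrightarrow> ((\<forall>f :: nat \<Rightarrow> baire \<Rightarrow> baire. (\<forall>k. f k \<in> F) \<longrightarrow> piecewise_union f \<in> F) \<and> Lip \<subseteq> F)"
proof -
  have comp: "\<And>f g. f \<in> F \<Longrightarrow> g \<in> F \<Longrightarrow> f \<circ> g \<in> F" and Lip1: "Lip1 \<subseteq> F"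
    using assms by (auto simp: set_of_reductions_def)
  have "closed_under_glued_sum F
      \<longleftrightarrow> closed_under_piecewise_union F \<and> Lip \<subseteq> F"
    using closed_under_piecewise_union_if_glued_sum[OF _ Lip1 comp]
      closed_under_glued_sum_if_piecewise_union[OF _ _ comp] Lip_subset[OF _ Lip1]
    by blast
  then show ?thesis
    unfolding closed_under_glued_sum_def closed_under_piecewise_union_def .
qed

end
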